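(* For $n\ge 1$, the friendship graph $F_n$ satisfies $\nu^*(F_n)=17n^2+n$.
   Context: For a finite simple graph $G=(V,E)$ with $\ell=|V|+|E|$, a construction sequence (c-sequence) is a bijection $x:\{1,\dots,\ell\}\to V\sqcup E$ such that every edge $e=uw$ satisfies $x^{-1}(e)>\max\{x^{-1}(u),x^{-1}(w)\}$. The cost of $x$ is $\nu(x)=\sum_{e=uw\in E}\big(2x^{-1}(e)-x^{-1}(u)-x^{-1}(w)\big)$, and $\nu^*(G)$ is the maximum of $\nu(x)$ over all c-sequences for $G$. The friendship graph $F_n$ is the wedge of $n$ triangles sharing exactly one common vertex (so it has $2n+1$ vertices and $3n$ edges). *)

theory Defs
  imports Main
begin

text \<open>A finite simple graph is given by a finite vertex set V and a set E of
  2-element subsets of V. The ground set is the disjoint union V + E, encoded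
  as Inl ` V \<union> Inr ` E.\<close>

definition simple_graph :: "'v set \<Rightarrow> 'v set set \<Rightarrow> bool" where
  "simple_graph V E \<longleftrightarrow> finite V \<and> (\<forall>e\<in>E. e \<subseteq> V \<and> card e = 2)"

definition glen :: "'v set \<Rightarrow> 'v set set \<Rightarrow> nat" where
  "glen V E = card V + card E"

definition pos :: "'v set \<Rightarrow> 'v set set \<Rightarrow> (nat \<Rightarrow> 'v + 'v set) \<Rightarrow> ('v + 'v set) \<Rightarrow> nat" where
  "pos V E x a = the_inv_into {1..glen V E} x a"

definition cseq :: "'v set \<Rightarrow> 'v set set \<Rightarrow> (nat \<Rightarrow> 'v + 'v set) \<Rightarrow> bool" where
  "cseq V E x \<longleftrightarrow> bij_betw x {1..glen V E} (Inl ` V \<union> Inr ` E) \<and>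
     (\<forall>e\<in>E. \<forall>u\<in>e. pos V E x (Inl u) < pos V E x (Inr e))"

definition cost :: "'v set \<Rightarrow> 'v set set \<Rightarrow> (nat \<Rightarrow> 'v + 'v set) \<Rightarrow> int" where
  "cost V E x = (\<Sum>e\<in>E. 2 * int (pos V E x (Inr e)) - (\<Sum>u\<in>e. int (pos V E x (Inl u))))"

definition nu_star :: "'v set \<Rightarrow> 'v set set \<Rightarrow> int" where
  "nu_star V E = Max {cost V E x | x. cseq V E x}"

text \<open>Friendship graph F_n: centre 0, triangles {0, 2k-1, 2k} for k = 1..n.\<close>
definition friendV :: "nat \<Rightarrow> nat set" where
  "friendV n = {0..2*n}"

definition friendE :: "nat \<Rightarrow> nat set set" where
  "friendE n = {{0, i} | i. i \<in> {1..2*n}} \<union> {{2*k - 1, 2*k} | k. k \<in> {1..n}}"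

end

theory Submission
  imports Defs
begin

text \<open>The positions of a c-sequence are a permutation of \<open>1..\<ell>\<close>, so the edge
  positions add up to \<open>\<ell>(\<ell>+1)/2\<close> minus the vertex positions, and the cost depends only on
  where the vertices sit. For \<open>F\<^sub>n\<close>, with \<open>\<ell> = 5n+1\<close> and centre \<open>c\<close>, it equals
  \<open>\<ell>(\<ell>+1) - 4 \<Sum>\<^sub>v x\<^sup>-\<^sup>1(v) - (2n-2) x\<^sup>-\<^sup>1(c)\<close>. The \<open>2n+1\<close> vertex positions are distinct positive
  integers, so their sum is at least \<open>(2n+1)(2n+2)/2\<close>, and \<open>x\<^sup>-\<^sup>1(c) \<ge> 1\<close>; both bounds are attained
  by listing the centre first, then the other vertices, then all edges in any order.\<close>

lemma simple_graph_finite_edges: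
  assumes "simple_graph V E"
  shows "finite E"
  using assms by (intro finite_subset[of E "Pow V"]) (auto simp: simple_graph_def)

lemma bij_betw_pos:
  assumes "cseq V E x"
  shows "bij_betw (pos V E x) (Inl ` V \<union> Inr ` E) {1..glen V E}"
  using assms unfolding cseq_def pos_def by (simp add: bij_betw_the_inv_into)

lemma sum_vertex_edge_positions:
  assumes "finite V" "finite E" "bij_betw q (Inl ` V \<union> Inr ` E) {1..l}"
  shows "(\<Sum>v\<in>V. q (Inl v)) + (\<Sum>e\<in>E. q (Inr e)) = \<Sum>{1..l}"
proof -
  have "(\<Sum>a\<in>Inl ` V \<union> Inr ` E. q a) = (\<Sum>a\<in>Inl ` V. q a) + (\<Sum>a\<in>Inr ` E. q a)"
    using assms(1,2) by (intro sum.union_disjoint) auto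
  then have "(\<Sum>v\<in>V. q (Inl v)) + (\<Sum>e\<in>E. q (Inr e)) = (\<Sum>a\<in>Inl ` V \<union> Inr ` E. q a)"
    by (simp add: sum.reindex)
  also have "\<dots> = \<Sum>{1..l}"
    using sum.reindex_bij_betw[OF assms(3), of id] by simp
  finally show ?thesis .
qed

lemma cost_eq_vertex_positions:
  assumes "simple_graph V E" "cseq V E x"
  shows "cost V E x = 2 * (\<Sum>i=1..glen V E. int i)
    - 2 * (\<Sum>v\<in>V. int (pos V E x (Inl v))) - (\<Sum>e\<in>E. \<Sum>u\<in>e. int (pos V E x (Inl u)))"
proof -
  let ?q = "pos V E x"
  have "(\<Sum>v\<in>V. ?q (Inl v)) + (\<Sum>e\<in>E. ?q (Inr e)) = \<Sum>{1..glen V E}"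
    using sum_vertex_edge_positions[OF _ _ bij_betw_pos[OF assms(2)]] simple_graph_finite_edges[OF assms(1)] assms(1)
    by (simp add: simple_graph_def)
  from arg_cong[where f=int, OF this]
  have "(\<Sum>v\<in>V. int (?q (Inl v))) + (\<Sum>e\<in>E. int (?q (Inr e))) = (\<Sum>i=1..glen V E. int i)"
    by simp
  moreover have "cost V E x = 2 * (\<Sum>e\<in>E. int (?q (Inr e))) - (\<Sum>e\<in>E. \<Sum>u\<in>e. int (?q (Inl u)))"
    unfolding cost_def by (simp add: sum_subtractf sum_distrib_left)
  ultimately show ?thesis
    by linarith
qed

lemma finite_costs:
  assumes "simple_graph V E"
  shows "finite {cost V E x | x. cseq V E x}"
proof -
  let ?l = "glen V E"
  define hi where "hi = 2 * (\<Sum>i=1..?l. int i)"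
  define lo where "lo = hi - 2 * (\<Sum>v\<in>V. int ?l) - (\<Sum>e\<in>E. \<Sum>u\<in>e. int ?l)"
  have "cost V E x \<in> {lo..hi}" if x: "cseq V E x" for x
  proof -
    have le: "pos V E x (Inl u) \<le> ?l" if "u \<in> V" for u
      using bij_betw_pos[OF x] that by (auto simp: bij_betw_def)
    have "e \<subseteq> V" if "e \<in> E" for e
      using assms that by (simp add: simple_graph_def)
    then have "(\<Sum>e\<in>E. \<Sum>u\<in>e. int (pos V E x (Inl u))) \<le> (\<Sum>e\<in>E. \<Sum>u\<in>e. int ?l)"
      using le by (intro sum_mono) auto
    moreover have "(\<Sum>v\<in>V. int (pos V E x (Inl v))) \<le> (\<Sum>v\<in>V. int ?l)"
      using le by (intro sum_mono) auto
    moreover have "0 \<le> (\<Sum>v\<in>V. int (pos V E x (Inl v)))" "0 \<le> (\<Sum>e\<in>E. \<Sum>u\<in>e. int (pos V E x (Inl u)))"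
      by (auto intro!: sum_nonneg)
    ultimately show ?thesis
      unfolding cost_eq_vertex_positions[OF assms x] atLeastAtMost_iff hi_def lo_def by linarith
  qed
  then have "{cost V E x | x. cseq V E x} \<subseteq> {lo..hi}"
    by auto
  then show ?thesis
    using finite_subset by blast
qed

lemma nu_star_eqI:
  assumes "simple_graph V E" "\<And>x. cseq V E x \<Longrightarrow> cost V E x \<le> c"
    and "cseq V E x\<^sub>0" "cost V E x\<^sub>0 = c"
  shows "nu_star V E = c"
  unfolding nu_star_def using assms finite_costs[OF assms(1)] by (intro Max_eqI) auto

lemma the_inv_into_the_inv_into:
  assumes "bij_betw f A B" "a \<in> A"
  shows "the_inv_into B (the_inv_into A f) a = f a"
  using assms by (intro the_inv_into_f_eq) (auto simp: bij_betw_def inj_on_the_inv_into the_inv_into_f_f)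

lemma cseq_with_vertex_positions:
  assumes "simple_graph V E" "bij_betw f V {1..card V}"
  obtains x where "cseq V E x" "\<And>v. v \<in> V \<Longrightarrow> pos V E x (Inl v) = f v"
proof -
  have "finite E"
    using simple_graph_finite_edges[OF assms(1)] .
  moreover have "card E = card {card V + 1..glen V E}"
    by (simp add: glen_def)
  ultimately obtain g where g: "bij_betw g E {card V + 1..glen V E}"
    using finite_same_card_bij[of E "{card V + 1..glen V E}"] by blast
  define p where "p = case_sum f g"
  have "bij_betw p (Inl ` V) {1..card V}"
    using assms(2) by (simp add: p_def comp_def bij_betw_comp_iff[OF inj_on_imp_bij_betw[of Inl V]])
  moreover have "bij_betw p (Inr ` E) {card V + 1..glen V E}"
    using g by (simp add: p_def comp_def bij_betw_comp_iff[OF inj_on_imp_bij_betw[of Inr E]])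
  ultimately have "bij_betw p (Inl ` V \<union> Inr ` E) ({1..card V} \<union> {card V + 1..glen V E})"
    by (rule bij_betw_combine) auto
  moreover have "{1..card V} \<union> {card V + 1..glen V E} = {1..glen V E}"
    by (auto simp: glen_def)
  ultimately have p: "bij_betw p (Inl ` V \<union> Inr ` E) {1..glen V E}"
    by simp
  define x where "x = the_inv_into (Inl ` V \<union> Inr ` E) p"
  have pos: "pos V E x a = p a" if "a \<in> Inl ` V \<union> Inr ` E" for a
    unfolding pos_def x_def using the_inv_into_the_inv_into[OF p that] .
  have cseq: "cseq V E x"
    unfolding cseq_def
  proof (intro conjI ballI)
    show "bij_betw x {1..glen V E} (Inl ` V \<union> Inr ` E)"
      unfolding x_def by (rule bij_betw_the_inv_into[OF p])
    fix e u assume "e \<in> E" "u \<in> e"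
    then have "u \<in> V" using assms(1) by (auto simp: simple_graph_def)
    have "f u \<in> {1..card V}" "g e \<in> {card V + 1..glen V E}"
      using bij_betw_apply[OF assms(2) \<open>u \<in> V\<close>] bij_betw_apply[OF g \<open>e \<in> E\<close>] by simp_all
    then have "f u < g e"
      by simp
    moreover have "pos V E x (Inl u) = f u" "pos V E x (Inr e) = g e"
      using pos \<open>e \<in> E\<close> \<open>u \<in> V\<close> by (simp_all add: p_def)
    ultimately show "pos V E x (Inl u) < pos V E x (Inr e)"
      by simp
  qed
  show thesis
    by (rule that[OF cseq]) (simp add: pos p_def)
qed

lemma sum_upto_card_le_sum:
  fixes A :: "nat set"
  assumes "finite A" "0 \<notin> A"
  shows "\<Sum>{1..card A} \<le> \<Sum>A"
  using assms
proof (induction "card A" arbitrary: A)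
  case 0
  then show ?case by simp
next
  case (Suc k)
  define m where "m = Max A"
  have "A \<noteq> {}" using Suc.hyps(2) by auto
  then have m: "m \<in> A" "\<forall>a\<in>A. a \<le> m"
    using Suc.prems(1) by (simp_all add: m_def)
  have "A \<subseteq> {1..m}"
    using m Suc.prems(2) by (auto simp: Suc_le_eq) (metis gr0I)
  then have "Suc k \<le> m"
    using card_mono[of "{1..m}" A] Suc.hyps(2) by simp
  have "card (A - {m}) = k"
    using Suc.hyps(2) m(1) by simp
  then have "\<Sum>{1..k} \<le> \<Sum>(A - {m})"
    using Suc.hyps(1)[of "A - {m}"] Suc.prems by simp
  moreover have "\<Sum>A = m + \<Sum>(A - {m})"
    using sum.remove[OF Suc.prems(1) m(1), of id] by simp
  ultimately show ?case
    using \<open>Suc k \<le> m\<close> \<open>Suc k = card A\<close>[symmetric] by simp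
qed

lemma sum_consecutive_pairs:
  fixes f :: "nat \<Rightarrow> 'a::comm_monoid_add"
  shows "(\<Sum>k=1..n. f (2*k - 1) + f (2*k)) = (\<Sum>i=1..2*n. f i)"
proof (induction n)
  case 0
  then show ?case by simp
next
  case (Suc n)
  have "{1..2 * Suc n} = insert (2*n + 2) (insert (2*n + 1) {1..2*n})"
    by auto
  then show ?case
    using Suc by (simp add: add.commute add.left_commute)
qed

lemma friendV_eq: "friendV n = insert 0 {1..2*n}"
  unfolding friendV_def by auto

lemma friendV_zero: "0 \<in> friendV n"
  by (simp add: friendV_def)

lemma friendE_eq: "friendE n = (\<lambda>i. {0, i}) ` {1..2*n} \<union> (\<lambda>k. {2*k - 1, 2*k}) ` {1..n}"
  unfolding friendE_def by auto

lemma card_friendE: "card (friendE n) = 3 * n"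
proof -
  have "inj_on (\<lambda>i::nat. {0, i}) {1..2*n}" "inj_on (\<lambda>k::nat. {2*k - 1, 2*k}) {1..n}"
    by (auto simp: inj_on_def doubleton_eq_iff)
  moreover have "(\<lambda>i::nat. {0, i}) ` {1..2*n} \<inter> (\<lambda>k. {2*k - 1, 2*k}) ` {1..n} = {}"
    by (auto simp: doubleton_eq_iff)
  ultimately show ?thesis
    unfolding friendE_eq by (simp add: card_Un_disjoint card_image)
qed

lemma simple_graph_friendship: "simple_graph (friendV n) (friendE n)"
  unfolding simple_graph_def friendV_def friendE_eq by auto

lemma glen_friendship: "glen (friendV n) (friendE n) = 5 * n + 1"
  by (simp add: glen_def friendV_def card_friendE)

lemma sum_incidences_friendship:
  fixes f :: "nat \<Rightarrow> int"
  shows "(\<Sum>e\<in>friendE n. \<Sum>u\<in>e. f u) = 2 * int n * f 0 + 2 * (\<Sum>i=1..2*n. f i)"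
proof -
  let ?spokes = "(\<lambda>i. {0, i}) ` {1..2*n}" and ?rim = "(\<lambda>k. {2*k - 1, 2*k}) ` {1..n}"
  have "(\<Sum>e\<in>friendE n. \<Sum>u\<in>e. f u) = (\<Sum>e\<in>?spokes. \<Sum>u\<in>e. f u) + (\<Sum>e\<in>?rim. \<Sum>u\<in>e. f u)"
    unfolding friendE_eq by (rule sum.union_disjoint) (auto simp: doubleton_eq_iff)
  also have "(\<Sum>e\<in>?spokes. \<Sum>u\<in>e. f u) = (\<Sum>i=1..2*n. f 0 + f i)"
    by (subst sum.reindex) (auto simp: inj_on_def doubleton_eq_iff intro!: sum.cong)
  also have "(\<Sum>e\<in>?rim. \<Sum>u\<in>e. f u) = (\<Sum>k=1..n. f (2*k - 1) + f (2*k))"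
    by (subst sum.reindex) (auto simp: inj_on_def doubleton_eq_iff intro!: sum.cong)
  finally show ?thesis
    unfolding sum_consecutive_pairs by (simp add: sum.distrib)
qed

lemma cost_friendship:
  assumes "cseq (friendV n) (friendE n) x"
  defines "q \<equiv> \<lambda>v. int (pos (friendV n) (friendE n) x (Inl v))"
  shows "cost (friendV n) (friendE n) x
    = 2 * (\<Sum>i=1..5*n + 1. int i) - 4 * (\<Sum>v\<in>friendV n. q v) - (2 * int n - 2) * q 0"
proof -
  have "(\<Sum>v\<in>friendV n. q v) = q 0 + (\<Sum>i=1..2*n. q i)"
    unfolding friendV_eq by simp
  then show ?thesis
    using cost_eq_vertex_positions[OF simple_graph_friendship assms(1)]
    unfolding glen_friendship sum_incidences_friendship q_def by (simp add: algebra_simps)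
qed

lemma friendship_bound_value:
  "2 * (\<Sum>i=1..5*n + 1. int i) - 4 * (\<Sum>i=1..2*n + 1. int i) - (2 * int n - 2) = 17 * int n ^ 2 + int n"
  using double_gauss_sum_from_Suc_0[of "5*n + 1", where 'a=int] double_gauss_sum_from_Suc_0[of "2*n + 1", where 'a=int]
  by (simp add: algebra_simps power2_eq_square)

lemma cost_friendship_le:
  assumes "n \<ge> 1" "cseq (friendV n) (friendE n) x"
  shows "cost (friendV n) (friendE n) x \<le> 17 * int n ^ 2 + int n"
proof -
  let ?q = "\<lambda>v. pos (friendV n) (friendE n) x (Inl v)"
  note bij = bij_betw_pos[OF assms(2), unfolded glen_friendship]
  have range: "?q v \<in> {1..5*n + 1}" if "v \<in> friendV n" for v
    using bij_betw_apply[OF bij] that by simp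
  have "inj_on (pos (friendV n) (friendE n) x) (Inl ` friendV n)"
    using inj_on_subset[OF bij_betw_imp_inj_on[OF bij]] by blast
  then have inj: "inj_on ?q (friendV n)"
    by (simp add: inj_on_def)
  have card: "card (?q ` friendV n) = 2*n + 1"
    using card_image[OF inj] by (simp add: friendV_def)
  have "\<Sum>{1..card (?q ` friendV n)} \<le> \<Sum>(?q ` friendV n)"
    using range by (intro sum_upto_card_le_sum) (fastforce simp: friendV_def)+
  also have "\<dots> = (\<Sum>v\<in>friendV n. ?q v)"
    using sum.reindex[OF inj, of id] by simp
  finally have "int (\<Sum>{1..2*n + 1}) \<le> int (\<Sum>v\<in>friendV n. ?q v)"
    unfolding card by (rule of_nat_mono)
  then have "4 * (\<Sum>i=1..2*n + 1. int i) \<le> 4 * (\<Sum>v\<in>friendV n. int (?q v))"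
    by (simp only: of_nat_sum)
  moreover have "(2 * int n - 2) * 1 \<le> (2 * int n - 2) * int (?q 0)"
    using range[OF friendV_zero] assms(1) by (intro mult_left_mono) auto
  ultimately show ?thesis
    unfolding cost_friendship[OF assms(2)] friendship_bound_value[symmetric]
    by (intro diff_mono) simp_all
qed

lemma friendship_optimal_cseq:
  obtains x where "cseq (friendV n) (friendE n) x" "cost (friendV n) (friendE n) x = 17 * int n ^ 2 + int n"
proof -
  have shift: "bij_betw Suc (friendV n) {1..card (friendV n)}"
    by (simp add: friendV_def bij_betw_def image_Suc_atLeastAtMost)
  then obtain x where x: "cseq (friendV n) (friendE n) x"
    and pos: "\<And>v. v \<in> friendV n \<Longrightarrow> pos (friendV n) (friendE n) x (Inl v) = Suc v"
    using cseq_with_vertex_positions[OF simple_graph_friendship] by blast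
  have "(\<Sum>v\<in>friendV n. int (pos (friendV n) (friendE n) x (Inl v))) = (\<Sum>v\<in>friendV n. int (Suc v))"
    by (simp add: pos)
  also have "\<dots> = (\<Sum>i=1..2*n + 1. int i)"
    using sum.reindex_bij_betw[OF shift, of int] by (simp add: friendV_def)
  finally have "cost (friendV n) (friendE n) x = 17 * int n ^ 2 + int n"
    unfolding cost_friendship[OF x] friendship_bound_value[symmetric] pos[OF friendV_zero] by simp
  with x show thesis
    using that by blast
qed

theorem theorem15:
  fixes n :: nat
  assumes "n \<ge> 1"
  shows "nu_star (friendV n) (friendE n) = 17 * int n ^ 2 + int n"
proof -
  obtain x where "cseq (friendV n) (friendE n) x" "cost (friendV n) (friendE n) x = 17 * int n ^ 2 + int n"
    using friendship_optimal_cseq .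
  with simple_graph_friendship cost_friendship_le[OF assms] show ?thesis
    by (rule nu_star_eqI)
qed

end
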